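(* Let $\Gamma=(V,E)$ be a graph without isolated vertices and let $k\le 1$ be an integer. If $S$ is a minimal global offensive $k$-alliance in $\Gamma$, then $\overline{S}=V\setminus S$ is a dominating set in $\Gamma$.
   Context: Graphs are finite and simple. For $S\subseteq V$ and $v\in V$, $\delta_S(v)$ is the number of neighbours of $v$ in $S$, $\overline{S}=V\setminus S$, and $\partial(S)$ the set of vertices of $\overline{S}$ with a neighbour in $S$. A nonempty $S$ is an offensive $k$-alliance if $\delta_S(v)\ge\delta_{\overline{S}}(v)+k$ for all $v\in\partial(S)$, and a global offensive $k$-alliance if moreover it is dominating (every vertex of $\overline{S}$ has a neighbour in $S$). A global offensive $k$-alliance $S$ is minimal if no proper subset of $S$ is a global offensive $k$-alliance. *)

theory Defs
  imports Main
begin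

definition simple_graph :: "'a set \<Rightarrow> ('a \<Rightarrow> 'a \<Rightarrow> bool) \<Rightarrow> bool" where
  "simple_graph V E \<longleftrightarrow> finite V \<and> (\<forall>u v. E u v \<longrightarrow> u \<in> V \<and> v \<in> V)
     \<and> (\<forall>u v. E u v \<longrightarrow> E v u) \<and> (\<forall>v. \<not> E v v)"

definition no_isolated :: "'a set \<Rightarrow> ('a \<Rightarrow> 'a \<Rightarrow> bool) \<Rightarrow> bool" where
  "no_isolated V E \<longleftrightarrow> (\<forall>v\<in>V. \<exists>u. E v u)"

definition delta :: "('a \<Rightarrow> 'a \<Rightarrow> bool) \<Rightarrow> 'a set \<Rightarrow> 'a \<Rightarrow> nat" where
  "delta E S v = card {u \<in> S. E v u}"

definition boundary :: "'a set \<Rightarrow> ('a \<Rightarrow> 'a \<Rightarrow> bool) \<Rightarrow> 'a set \<Rightarrow> 'a set" where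
  "boundary V E S = {v \<in> V - S. \<exists>u\<in>S. E v u}"

definition dominating :: "'a set \<Rightarrow> ('a \<Rightarrow> 'a \<Rightarrow> bool) \<Rightarrow> 'a set \<Rightarrow> bool" where
  "dominating V E D \<longleftrightarrow> D \<subseteq> V \<and> (\<forall>v\<in>V - D. \<exists>u\<in>D. E v u)"

definition offensive_alliance :: "'a set \<Rightarrow> ('a \<Rightarrow> 'a \<Rightarrow> bool) \<Rightarrow> int \<Rightarrow> 'a set \<Rightarrow> bool" where
  "offensive_alliance V E k S \<longleftrightarrow> S \<noteq> {} \<and> S \<subseteq> V \<and>
     (\<forall>v\<in>boundary V E S. int (delta E S v) \<ge> int (delta E (V - S) v) + k)"

definition global_offensive_alliance :: "'a set \<Rightarrow> ('a \<Rightarrow> 'a \<Rightarrow> bool) \<Rightarrow> int \<Rightarrow> 'a set \<Rightarrow> bool" where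
  "global_offensive_alliance V E k S \<longleftrightarrow> offensive_alliance V E k S \<and> dominating V E S"

definition minimal_global_offensive_alliance :: "'a set \<Rightarrow> ('a \<Rightarrow> 'a \<Rightarrow> bool) \<Rightarrow> int \<Rightarrow> 'a set \<Rightarrow> bool" where
  "minimal_global_offensive_alliance V E k S \<longleftrightarrow> global_offensive_alliance V E k S \<and>
     (\<forall>T. T \<subset> S \<longrightarrow> \<not> global_offensive_alliance V E k T)"

end

theory Submission
  imports Defs
begin

text \<open>If some vertex v of a global offensive k-alliance S had no neighbour outside S, then
  removing v would leave a smaller global offensive k-alliance: the vertices outside S do not
  see v, so their counts are unchanged, and v itself becomes a boundary vertex with no
  neighbour outside S - {v} and at least one (from the absence of isolated vertices) inside,
  which suffices since k \<le> 1. Hence in a minimal alliance every vertex of S has a neighbour in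
  V - S.\<close>

lemma delta_Diff_nonadjacent: "\<not> E w v \<Longrightarrow> delta E (A - {v}) w = delta E A w"
  unfolding delta_def by (metis Diff_iff singletonD)

lemma delta_insert_nonadjacent: "\<not> E w v \<Longrightarrow> delta E (insert v A) w = delta E A w"
  unfolding delta_def by (metis insert_iff)

lemma delta_pos: "finite A \<Longrightarrow> u \<in> A \<Longrightarrow> E w u \<Longrightarrow> 0 < delta E A w"
  unfolding delta_def by (auto simp: card_gt_0_iff)

lemma delta_eq_0: "(\<And>u. u \<in> A \<Longrightarrow> \<not> E w u) \<Longrightarrow> delta E A w = 0"
  unfolding delta_def by (metis (no_types, lifting) card.empty empty_Collect_eq)

lemma global_offensive_alliance_Diff_private_vertex:
  assumes G: "simple_graph V E"
    and k: "k \<le> 1"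
    and S: "global_offensive_alliance V E k S"
    and v: "v \<in> S" and outside: "\<And>u. u \<in> V - S \<Longrightarrow> \<not> E v u"
    and u: "u \<in> S" "E v u"
  shows "global_offensive_alliance V E k (S - {v})"
proof -
  have fin: "finite V" and sym: "\<And>x y. E x y \<Longrightarrow> E y x" and irr: "\<And>x. \<not> E x x"
    using G unfolding simple_graph_def by auto
  have SV: "S \<subseteq> V"
    and off: "\<And>w. w \<in> boundary V E S \<Longrightarrow> int (delta E (V - S) w) + k \<le> int (delta E S w)"
    and dom: "\<And>w. w \<in> V - S \<Longrightarrow> \<exists>x\<in>S. E w x"
    using S unfolding global_offensive_alliance_def offensive_alliance_def dominating_def by auto
  define T where "T = S - {v}"
  have uT: "u \<in> T" using u irr unfolding T_def by auto
  have compl_T: "V - T = insert v (V - S)" using v SV unfolding T_def by auto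
  have not_to_v: "\<And>w. w \<in> V - S \<Longrightarrow> \<not> E w v" using outside sym by blast
  have offensive_at: "int (delta E (V - T) w) + k \<le> int (delta E T w)"
    if w: "w \<in> boundary V E T" for w
  proof (cases "w = v")
    case True
    have "delta E (V - T) v = 0" using outside irr compl_T by (intro delta_eq_0) auto
    moreover have "0 < delta E T v" using fin SV uT u(2) unfolding T_def
      by (intro delta_pos) (auto intro: finite_subset)
    ultimately show ?thesis using True k by simp
  next
    case False
    then have "w \<in> V - S" "w \<in> boundary V E S"
      using w unfolding boundary_def T_def by auto
    then show ?thesis
      using off not_to_v compl_T unfolding T_def
      by (simp add: delta_Diff_nonadjacent delta_insert_nonadjacent)
  qed
  have dominating_at: "\<exists>x\<in>T. E w x" if w: "w \<in> V - T" for w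
  proof (cases "w = v")
    case True then show ?thesis using uT u(2) by auto
  next
    case False
    then have "w \<in> V - S" using w unfolding T_def by auto
    then show ?thesis using dom not_to_v unfolding T_def by fastforce
  qed
  have "T \<subseteq> V" using SV unfolding T_def by auto
  then show ?thesis
    unfolding global_offensive_alliance_def offensive_alliance_def dominating_def T_def[symmetric]
    using uT offensive_at dominating_at by auto
qed

theorem mainTheorem8:
  fixes V :: "'a set" and E :: "'a \<Rightarrow> 'a \<Rightarrow> bool" and k :: int and S :: "'a set"
  assumes "simple_graph V E"
    and "no_isolated V E"
    and "k \<le> 1"
    and "minimal_global_offensive_alliance V E k S"
  shows "dominating V E (V - S)"
proof (rule ccontr)
  have S: "global_offensive_alliance V E k S"
    and minimal: "\<And>T. T \<subset> S \<Longrightarrow> \<not> global_offensive_alliance V E k T"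
    using assms(4) unfolding minimal_global_offensive_alliance_def by auto
  assume "\<not> dominating V E (V - S)"
  then obtain v where v: "v \<in> S" "v \<in> V" and outside: "\<And>u. u \<in> V - S \<Longrightarrow> \<not> E v u"
    unfolding dominating_def by auto
  obtain u where u: "E v u" using assms(2) v unfolding no_isolated_def by auto
  then have "u \<in> S" using outside assms(1) unfolding simple_graph_def by blast
  with u have "global_offensive_alliance V E k (S - {v})"
    by (intro global_offensive_alliance_Diff_private_vertex[OF assms(1,3) S v(1) outside])
  moreover have "S - {v} \<subset> S" using v by auto
  ultimately show False using minimal by blast
qed

end
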